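(* Let $\psi:\mathbb{H}\to\mathbb{H}$ be a linear isometry. The pair $(\varphi,\psi)=(I_{\mathbb{H}},\psi)$ satisfies (i) $\varphi(\varphi(x)x)=\varphi(x)x$ for all $x$, (ii) $\varphi(\bar x\psi(x))=\bar x\psi(x)$ for all $x$, (iii) $\psi(\psi(y)\bar x+y\varphi(x))=\psi(y)\bar x+y\varphi(x)$ for all $x,y$, if and only if $\psi\in\{I_{\mathbb{H}}\}\cup\{-T_{a,a}\circ\sigma_{\mathbb{H}}: a\in\mathbb{H},\ |a|=1\}$.
   Context: $T_{a,b}(x)=axb$ and $\sigma_{\mathbb{H}}(x)=\bar x$ on the quaternions $\mathbb{H}$; $I_{\mathbb{H}}$ is the identity. *)

theory Defs
  imports "HOL-Analysis.Analysis"
begin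

datatype quat = Quat (Re: real) (Im1: real) (Im2: real) (Im3: real)

lemma quat_eq_iff: "x = y \<longleftrightarrow> Re x = Re y \<and> Im1 x = Im1 y \<and> Im2 x = Im2 y \<and> Im3 x = Im3 y"
  by (cases x; cases y) auto

instantiation quat :: ring_1
begin
definition "0 = Quat 0 0 0 0"
definition "1 = Quat 1 0 0 0"
definition "x + y = Quat (Re x + Re y) (Im1 x + Im1 y) (Im2 x + Im2 y) (Im3 x + Im3 y)"
definition "x - y = Quat (Re x - Re y) (Im1 x - Im1 y) (Im2 x - Im2 y) (Im3 x - Im3 y)"
definition "- x = Quat (- Re x) (- Im1 x) (- Im2 x) (- Im3 x)"
definition "x * y = Quat
  (Re x * Re y - Im1 x * Im1 y - Im2 x * Im2 y - Im3 x * Im3 y)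
  (Re x * Im1 y + Im1 x * Re y + Im2 x * Im3 y - Im3 x * Im2 y)
  (Re x * Im2 y - Im1 x * Im3 y + Im2 x * Re y + Im3 x * Im1 y)
  (Re x * Im3 y + Im1 x * Im2 y - Im2 x * Im1 y + Im3 x * Re y)"
instance
  by standard (auto simp: quat_eq_iff zero_quat_def one_quat_def plus_quat_def
      minus_quat_def uminus_quat_def times_quat_def algebra_simps)
end

instantiation quat :: real_vector
begin
definition "scaleR r x = Quat (r * Re x) (r * Im1 x) (r * Im2 x) (r * Im3 x)"
instance
  by standard (auto simp: quat_eq_iff scaleR_quat_def plus_quat_def algebra_simps)
end

definition cnj :: "quat \<Rightarrow> quat" where
  "cnj x = Quat (Re x) (- Im1 x) (- Im2 x) (- Im3 x)"

definition qnorm :: "quat \<Rightarrow> real" where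
  "qnorm x = sqrt ((Re x)\<^sup>2 + (Im1 x)\<^sup>2 + (Im2 x)\<^sup>2 + (Im3 x)\<^sup>2)"

definition T :: "quat \<Rightarrow> quat \<Rightarrow> quat \<Rightarrow> quat" where
  "T a b x = a * x * b"

end

theory Submission
  imports Defs
begin

text \<open>With \<open>\<phi> = id\<close> conditions (i) and (ii) are trivial, so everything is about (iii):
  \<open>\<psi>(\<psi>(y) x\<^sup>* + y x) = \<psi>(y) x\<^sup>* + y x\<close>. If \<open>\<psi> \<noteq> id\<close>, pick \<open>d = x\<^sub>0 - \<psi>(x\<^sub>0) \<noteq> 0\<close>;
  since \<open>\<psi>\<close> is orthogonal, \<open>d\<close> is orthogonal to every fixed point of \<open>\<psi>\<close>. Taking
  \<open>y = d x\<^sup>*\<close> in (iii), the fixed point \<open>\<psi>(y) x\<^sup>* + y x\<close> is orthogonal to \<open>d\<close>, which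
  unfolds to \<open>|\<psi>(y) + d x|\<^sup>2 = 0\<close>. Hence \<open>\<psi>(d x\<^sup>*) = -d x\<close> for all \<open>x\<close>, i.e.
  \<open>\<psi>(z) = -d z\<^sup>* d / |d|\<^sup>2\<close>. Conversely, for \<open>|a| = 1\<close> and \<open>\<psi> = -T\<^sub>a\<^sub>,\<^sub>a \<circ> \<sigma>\<close>,
  write \<open>y = a u\<^sup>*\<close> with \<open>u = y\<^sup>* a\<close>; then (iii) reduces to \<open>x u\<^sup>* - x\<^sup>* u = u\<^sup>* x - u x\<^sup>*\<close>, which holds because
  \<open>x u\<^sup>* + u x\<^sup>*\<close> and \<open>u\<^sup>* x + x\<^sup>* u\<close> both equal the real scalar \<open>2 \<langle>x, u\<rangle>\<close>.\<close>

definition qsqnorm :: "quat \<Rightarrow> real" where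
  "qsqnorm x = (Re x)\<^sup>2 + (Im1 x)\<^sup>2 + (Im2 x)\<^sup>2 + (Im3 x)\<^sup>2"

definition qinner :: "quat \<Rightarrow> quat \<Rightarrow> real" where
  "qinner x y = Re x * Re y + Im1 x * Im1 y + Im2 x * Im2 y + Im3 x * Im3 y"

lemmas quat_coord_defs = quat_eq_iff zero_quat_def one_quat_def plus_quat_def
  minus_quat_def uminus_quat_def times_quat_def scaleR_quat_def cnj_def qsqnorm_def qinner_def

lemma qnorm_eq_sqrt_qsqnorm: "qnorm x = sqrt (qsqnorm x)"
  by (simp add: qnorm_def qsqnorm_def)

lemma qsqnorm_nonneg: "qsqnorm x \<ge> 0"
  by (simp add: qsqnorm_def)

lemma qnorm_eq_iff_qsqnorm_eq: "qnorm x = qnorm y \<longleftrightarrow> qsqnorm x = qsqnorm y"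
  by (simp add: qnorm_eq_sqrt_qsqnorm qsqnorm_nonneg)

lemma qsqnorm_eq_0_iff: "qsqnorm x = 0 \<longleftrightarrow> x = 0"
  by (cases x) (simp add: qsqnorm_def zero_quat_def add_nonneg_eq_0_iff)

lemma qsqnorm_pos: "x \<noteq> 0 \<Longrightarrow> qsqnorm x > 0"
  using qsqnorm_nonneg qsqnorm_eq_0_iff by (metis less_eq_real_def)

lemma qsqnorm_scaleR: "qsqnorm (c *\<^sub>R x) = c\<^sup>2 * qsqnorm x"
  by (simp add: qsqnorm_def scaleR_quat_def power_mult_distrib algebra_simps)

lemma qsqnorm_add: "qsqnorm (x + y) = qsqnorm x + qsqnorm y + 2 * qinner x y"
  by (simp add: quat_coord_defs power2_eq_square algebra_simps)

lemma qsqnorm_mult: "qsqnorm (x * y) = qsqnorm x * qsqnorm y"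
  by (simp add: quat_coord_defs power2_eq_square algebra_simps)

lemma qsqnorm_cnj: "qsqnorm (cnj x) = qsqnorm x"
  by (simp add: quat_coord_defs)

lemma qinner_commute: "qinner x y = qinner y x"
  by (simp add: qinner_def algebra_simps)

lemma qinner_add_left: "qinner (x + y) z = qinner x z + qinner y z"
  by (simp add: quat_coord_defs algebra_simps)

lemma qinner_diff_left: "qinner (x - y) z = qinner x z - qinner y z"
  by (simp add: quat_coord_defs algebra_simps)

lemma qinner_self: "qinner x x = qsqnorm x"
  by (simp add: quat_coord_defs power2_eq_square)

lemma qinner_mult_cnj_left: "qinner (y * cnj x) z = qinner y (z * x)"
  by (simp add: quat_coord_defs algebra_simps)

lemma qinner_mult_left: "qinner (y * x) z = qinner y (z * cnj x)"
  by (simp add: quat_coord_defs algebra_simps)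

lemma cnj_cnj [simp]: "cnj (cnj x) = x"
  by (cases x) (simp add: cnj_def)

lemma cnj_mult: "cnj (x * y) = cnj y * cnj x"
  by (simp add: quat_coord_defs algebra_simps)

lemma cnj_diff: "cnj (x - y) = cnj x - cnj y"
  by (simp add: quat_coord_defs)

lemma mult_cnj_self: "x * cnj x = qsqnorm x *\<^sub>R 1"
  by (simp add: quat_coord_defs power2_eq_square algebra_simps)

lemma cnj_mult_self: "cnj x * x = qsqnorm x *\<^sub>R 1"
  by (simp add: quat_coord_defs power2_eq_square algebra_simps)

lemma mult_cnj_diff_swap: "x * cnj y - cnj x * y = cnj y * x - y * cnj x"
  by (simp add: quat_coord_defs algebra_simps)

lemma cnj_scaleR: "cnj (c *\<^sub>R x) = c *\<^sub>R cnj x"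
  by (simp add: quat_coord_defs)

lemma mult_scaleR_right: "(x::quat) * (c *\<^sub>R y) = c *\<^sub>R (x * y)"
  by (simp add: quat_coord_defs algebra_simps)

lemma scaleR_sandwich: "(c *\<^sub>R (x::quat)) * y * (c *\<^sub>R x) = (c * c) *\<^sub>R (x * y * x)"
  by (simp add: quat_coord_defs algebra_simps)

lemma mult_cnj_mult_cnj: "d * cnj (cnj z * d) = qsqnorm d *\<^sub>R z"
  by (simp add: quat_coord_defs power2_eq_square algebra_simps)

lemma linear_isometry_qinner:
  assumes "linear \<psi>" and "\<And>x. qsqnorm (\<psi> x) = qsqnorm x"
  shows "qinner (\<psi> x) (\<psi> y) = qinner x y"
  using qsqnorm_add[of x y] qsqnorm_add[of "\<psi> x" "\<psi> y"] assms(2)[of "x + y"]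
    assms(2)[of x] assms(2)[of y] linear_add[OF assms(1), of x y]
  by simp

lemma displacement_orthogonal_fixed_point:
  assumes "linear \<psi>" and "\<And>x. qsqnorm (\<psi> x) = qsqnorm x" and "\<psi> f = f"
  shows "qinner f (x - \<psi> x) = 0"
proof -
  have "qinner f (x - \<psi> x) = qinner x f - qinner (\<psi> x) (\<psi> f)"
    using assms(3) by (simp add: qinner_commute[of f] qinner_diff_left)
  also have "\<dots> = 0"
    by (simp add: linear_isometry_qinner[OF assms(1,2)])
  finally show ?thesis .
qed

lemma twisted_fixed_point_mult_cnj:
  assumes iso: "\<And>x. qsqnorm (\<psi> x) = qsqnorm x"
    and twisted: "\<And>x y. \<psi> (\<psi> y * cnj x + y * x) = \<psi> y * cnj x + y * x"
    and orth: "\<And>f. \<psi> f = f \<Longrightarrow> qinner f d = 0"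
  shows "\<psi> (d * cnj x) = - (d * x)"
proof -
  let ?y = "d * cnj x"
  have "qinner (\<psi> ?y * cnj x + ?y * x) d = 0"
    using twisted orth by blast
  hence cross: "qinner (\<psi> ?y) (d * x) + qsqnorm ?y = 0"
    by (simp add: qinner_add_left qinner_mult_cnj_left qinner_mult_left qinner_self)
  have "qsqnorm (\<psi> ?y + d * x) = qsqnorm ?y + qsqnorm (d * x) + 2 * qinner (\<psi> ?y) (d * x)"
    by (simp add: qsqnorm_add iso)
  also have "\<dots> = 0"
    using cross by (simp add: qsqnorm_mult qsqnorm_cnj)
  finally show ?thesis
    by (simp add: qsqnorm_eq_0_iff eq_neg_iff_add_eq_0)
qed

lemma antisandwich_of_mult_cnj:
  assumes "d \<noteq> 0" and "\<And>x. \<psi> (d * cnj x) = - (d * x)"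
  shows "\<exists>a. qnorm a = 1 \<and> \<psi> = (\<lambda>x. - (T a a \<circ> cnj) x)"
proof -
  have pos: "qsqnorm d > 0"
    using assms(1) by (rule qsqnorm_pos)
  define a where "a = (1 / sqrt (qsqnorm d)) *\<^sub>R d"
  have "qsqnorm a = 1"
    using pos by (simp add: a_def qsqnorm_scaleR power_divide)
  hence "qnorm a = 1"
    by (simp add: qnorm_eq_sqrt_qsqnorm)
  moreover have "\<psi> z = - (T a a \<circ> cnj) z" for z
  proof -
    define x where "x = (1 / qsqnorm d) *\<^sub>R (cnj z * d)"
    have "d * cnj x = z"
      using pos by (simp add: x_def cnj_scaleR mult_scaleR_right mult_cnj_mult_cnj)
    hence "\<psi> z = - (d * x)"
      using assms(2)[of x] by simp
    also have "\<dots> = - ((1 / qsqnorm d) *\<^sub>R (d * cnj z * d))"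
      by (simp add: x_def mult_scaleR_right mult.assoc)
    also have "\<dots> = - (T a a \<circ> cnj) z"
      using pos by (simp add: a_def T_def scaleR_sandwich)
    finally show ?thesis .
  qed
  ultimately show ?thesis
    by blast
qed

lemma antisandwich_twisted_fixed_point:
  assumes "qnorm a = 1" and "\<psi> = (\<lambda>x. - (T a a \<circ> cnj) x)"
  shows "\<psi> (\<psi> y * cnj x + y * x) = \<psi> y * cnj x + y * x"
proof -
  have "qsqnorm a = 1"
    using assms(1) qsqnorm_nonneg by (simp add: qnorm_eq_sqrt_qsqnorm)
  hence unit: "a * cnj a = 1" "cnj a * a = 1"
    by (simp_all add: mult_cnj_self cnj_mult_self)
  have \<psi>_mult: "\<psi> (a * v) = - (a * cnj v)" for v
    using unit(2) by (simp add: assms(2) T_def cnj_mult mult.assoc)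
  define u where "u = cnj y * a"
  have y: "y = a * cnj u"
    using unit(1) by (simp add: u_def cnj_mult mult.assoc[symmetric])
  have "\<psi> y = - (a * u)"
    by (simp add: assms(2) T_def u_def mult.assoc)
  hence "\<psi> y * cnj x + y * x = - (a * u) * cnj x + a * cnj u * x"
    by (subst (2) y) simp
  also have "\<dots> = a * (cnj u * x - u * cnj x)"
    by (simp add: algebra_simps)
  finally have w: "\<psi> y * cnj x + y * x = a * (cnj u * x - u * cnj x)" .
  have "\<psi> (a * (cnj u * x - u * cnj x)) = a * (x * cnj u - cnj x * u)"
    unfolding \<psi>_mult by (simp add: cnj_diff cnj_mult algebra_simps)
  also have "\<dots> = a * (cnj u * x - u * cnj x)"
    by (simp only: mult_cnj_diff_swap)
  finally have "\<psi> (a * (cnj u * x - u * cnj x)) = a * (cnj u * x - u * cnj x)" .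
  thus ?thesis
    by (simp only: w)
qed

theorem lemma10:
  fixes \<phi> \<psi> :: "quat \<Rightarrow> quat"
  assumes "\<phi> = id"
    and "linear \<psi>"
    and "\<forall>x. qnorm (\<psi> x) = qnorm x"
  shows "((\<forall>x. \<phi> (\<phi> x * x) = \<phi> x * x)
          \<and> (\<forall>x. \<phi> (cnj x * \<psi> x) = cnj x * \<psi> x)
          \<and> (\<forall>x y. \<psi> (\<psi> y * cnj x + y * \<phi> x) = \<psi> y * cnj x + y * \<phi> x))
         \<longleftrightarrow> (\<psi> = id \<or> (\<exists>a. qnorm a = 1 \<and> \<psi> = (\<lambda>x. - (T a a \<circ> cnj) x)))"
proof -
  have iso: "qsqnorm (\<psi> x) = qsqnorm x" for x
    using assms(3) by (simp add: qnorm_eq_iff_qsqnorm_eq)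
  have "\<psi> = id \<or> (\<exists>a. qnorm a = 1 \<and> \<psi> = (\<lambda>x. - (T a a \<circ> cnj) x))"
    if twisted: "\<forall>x y. \<psi> (\<psi> y * cnj x + y * x) = \<psi> y * cnj x + y * x"
  proof (cases "\<psi> = id")
    case False
    then obtain x0 where "\<psi> x0 \<noteq> x0"
      by (metis eq_id_iff)
    hence "x0 - \<psi> x0 \<noteq> 0"
      by simp
    moreover have "\<psi> ((x0 - \<psi> x0) * cnj x) = - ((x0 - \<psi> x0) * x)" for x
      using twisted_fixed_point_mult_cnj[OF iso] twisted
        displacement_orthogonal_fixed_point[OF assms(2) iso]
      by blast
    ultimately show ?thesis
      by (blast intro: antisandwich_of_mult_cnj)
  qed simp
  moreover have "\<psi> (\<psi> y * cnj x + y * x) = \<psi> y * cnj x + y * x"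
    if "\<psi> = id \<or> (\<exists>a. qnorm a = 1 \<and> \<psi> = (\<lambda>x. - (T a a \<circ> cnj) x))" for x y
    using that antisandwich_twisted_fixed_point by auto
  ultimately show ?thesis
    using assms(1) by auto
qed

end
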